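(* Let $P\in\mathbb N$ and let $\{E_i\mid i\in[P]\}$ be a collection of finite sets. There exists a pairwise disjoint collection $\{V_i\mid i\in[P]\}$ such that for all $i\in[P]$, $V_i\subseteq E_i$ and $\#V_i\ge\lfloor\#E_i/P\rfloor$.
   Context: $[P]=\{0,1,\dots,P-1\}$. *)

theory Defs
  imports Main
begin

end

theory Submission
  imports Defs
begin

text \<open>Choose the subsets greedily, in increasing order of their prescribed sizes \<open>k i\<close>.
  When \<open>V x\<close> is chosen, the at most \<open>card I - 1\<close> sets chosen before have at most \<open>k x\<close>
  elements each, so they cover at most \<open>(card I - 1) * k x\<close> elements of \<open>E x\<close>, and at least
  \<open>k x\<close> elements remain. For the theorem take \<open>I = {..<P}\<close> and \<open>k i = card (E i) div P\<close>,
  so that \<open>card I * k i \<le> card (E i)\<close>.\<close>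

lemma obtain_subset_disjoint_from_family:
  fixes V :: "'i \<Rightarrow> 'a set"
  assumes "finite S"
    and "\<And>j. j \<in> S \<Longrightarrow> finite (V j)"
    and "\<And>j. j \<in> S \<Longrightarrow> card (V j) \<le> m"
    and "card S * m + n \<le> card A"
  obtains T where "T \<subseteq> A" "card T = n" "\<And>j. j \<in> S \<Longrightarrow> T \<inter> V j = {}"
proof -
  define U where "U = (\<Union>j\<in>S. V j)"
  have "finite U"
    unfolding U_def using assms(1,2) by (rule finite_UN_I)
  have "card U \<le> (\<Sum>j\<in>S. card (V j))"
    unfolding U_def using assms(1) by (rule card_UN_le)
  also have "\<dots> \<le> card S * m"
    using sum_bounded_above[of S "\<lambda>j. card (V j)" m] assms(3) by simp
  finally have "n \<le> card (A - U)"
    using assms(4) diff_card_le_card_Diff[OF \<open>finite U\<close>, of A] by linarith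
  then obtain T where T: "T \<subseteq> A - U" "card T = n"
    by (meson obtain_subset_with_card_n)
  show thesis
  proof (rule that)
    show "T \<subseteq> A"
      using T(1) by blast
    show "card T = n"
      by (fact T(2))
    show "T \<inter> V j = {}" if "j \<in> S" for j
      using T(1) that unfolding U_def by blast
  qed
qed

lemma ex_disjoint_subsets_card_eq:
  fixes E :: "'i \<Rightarrow> 'a set" and k :: "'i \<Rightarrow> nat"
  assumes "finite I"
    and "\<And>i. i \<in> I \<Longrightarrow> finite (E i)"
    and "\<And>i. i \<in> I \<Longrightarrow> card I * k i \<le> card (E i)"
  shows "\<exists>V. (\<forall>i\<in>I. \<forall>j\<in>I. i \<noteq> j \<longrightarrow> V i \<inter> V j = {}) \<and>
             (\<forall>i\<in>I. V i \<subseteq> E i \<and> card (V i) = k i)"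
  using assms
proof (induction I rule: finite_ranking_induct[where f = k])
  case empty
  then show ?case by simp
next
  case (insert x S)
  show ?case
  proof (cases "x \<in> S")
    case True
    then show ?thesis using insert by (simp add: insert_absorb)
  next
    case False
    have card_insert: "card (insert x S) = Suc (card S)"
      using False insert.hyps(1) by simp
    have card_S: "card S * k i \<le> card (E i)" if "i \<in> S" for i
    proof -
      have "card S * k i \<le> card (insert x S) * k i"
        using card_insert by simp
      also have "\<dots> \<le> card (E i)"
        using insert.prems(2) that by blast
      finally show ?thesis .
    qed
    have fin_S: "\<And>i. i \<in> S \<Longrightarrow> finite (E i)"
      using insert.prems(1) by blast
    obtain V where disjoint: "\<forall>i\<in>S. \<forall>j\<in>S. i \<noteq> j \<longrightarrow> V i \<inter> V j = {}"
      and V: "\<forall>i\<in>S. V i \<subseteq> E i \<and> card (V i) = k i"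
      using insert.IH[OF fin_S card_S] by blast
    have fin_V: "finite (V j)" if "j \<in> S" for j
      using V fin_S[OF that] that by (blast intro: finite_subset)
    have card_V: "card (V j) \<le> k x" if "j \<in> S" for j
      using V insert.hyps(2) that by simp
    have bound: "card S * k x + k x \<le> card (E x)"
      using insert.prems(2)[of x] card_insert by simp
    obtain T where T: "T \<subseteq> E x" "card T = k x" "\<And>j. j \<in> S \<Longrightarrow> T \<inter> V j = {}"
      by (rule obtain_subset_disjoint_from_family[of S V "k x"])
        (use insert.hyps(1) fin_V card_V bound in auto)
    then have "\<forall>i\<in>insert x S. \<forall>j\<in>insert x S. i \<noteq> j \<longrightarrow> (V(x := T)) i \<inter> (V(x := T)) j = {}"
      using disjoint False by (metis fun_upd_apply inf_commute insert_iff)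
    moreover have "\<forall>i\<in>insert x S. (V(x := T)) i \<subseteq> E i \<and> card ((V(x := T)) i) = k i"
      using V T False by auto
    ultimately show ?thesis by blast
  qed
qed

theorem proposition12:
  fixes P :: nat and E :: "nat \<Rightarrow> 'a set"
  assumes "\<forall>i<P. finite (E i)"
  shows "\<exists>V :: nat \<Rightarrow> 'a set.
           (\<forall>i<P. \<forall>j<P. i \<noteq> j \<longrightarrow> V i \<inter> V j = {}) \<and>
           (\<forall>i<P. V i \<subseteq> E i \<and> card (V i) \<ge> card (E i) div P)"
proof -
  have "\<And>i. card {..<P} * (card (E i) div P) \<le> card (E i)"
    by simp
  then obtain V :: "nat \<Rightarrow> 'a set"
    where disjoint: "\<forall>i\<in>{..<P}. \<forall>j\<in>{..<P}. i \<noteq> j \<longrightarrow> V i \<inter> V j = {}"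
      and V: "\<forall>i\<in>{..<P}. V i \<subseteq> E i \<and> card (V i) = card (E i) div P"
    using ex_disjoint_subsets_card_eq[of "{..<P}" E "\<lambda>i. card (E i) div P"] assms by auto
  show ?thesis
    using disjoint V by (intro exI[of _ V]) simp
qed

end
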